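(* Let $\alpha,\gamma,\mu,\delta,\rho>0$ and consider, for a parameter $b>0$, the system \[ \dot P=P\big[(b-\mu)-2bP+(\delta-b)A\big],\qquad \dot A=-(2\delta P+\rho)A \] on $\mathcal F=\{(P,A): P\ge0,\ A\ge0,\ 2P+A\le1\}$, with centrist share $C=1-2P-A$. Suppose that before time $t_0$ the parameter is $b=\beta_0$ with $\beta_0<\mu$, and let $(P(t_0^-),A(t_0^-))\in\mathcal F$ be the state at $t_0$. A structural shock $(\Delta,\Delta\beta)$ with $\Delta\in[0,1]$ at $t_0$ sets $P(t_0^+)=P(t_0^-)$, $C(t_0^+)=(1-\Delta)C(t_0^-)$, $A(t_0^+)=A(t_0^-)+\Delta C(t_0^-)$, and for $t>t_0$ the system evolves with parameter $b=\beta':=\beta_0+\Delta\beta>0$. If $P(t_0^-)>0$, then $\lim_{t\to\infty}C(t)<1$ (a permanent shift of the long-run equilibrium) if and only if $\beta_0+\Delta\beta>\mu$; in that case \[ \lim_{t\to\infty}C(t)=C^\infty=\frac{\mu}{\beta_0+\Delta\beta}<1, \] which does not depend on $\Delta$ (and if $\beta_0+\Delta\beta\le\mu$ then $C(t)\to1$). If $P(t_0^-)=0$, then $P(t)\equiv0$ for all $t>t_0$ regardless of $\Delta\beta$, and $(P(t),A(t))\to(0,0)$.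
   Context: This is the symmetric reduction ($L=R=P$) of a four-group voter model (left-radical, right-radical, centrist, disengaged) with $b=\alpha+\gamma$ the combined recruitment/reactive-polarisation rate, $\mu$ deradicalisation rate, $\delta$ mobilisation rate of disengaged voters, $\rho$ re-engagement rate. *)

theory Defs
  imports Complex_Main
begin

definition feasible :: "real \<Rightarrow> real \<Rightarrow> bool" where
  "feasible p a \<longleftrightarrow> 0 \<le> p \<and> 0 \<le> a \<and> 2 * p + a \<le> 1"

definition centrist :: "real \<Rightarrow> real \<Rightarrow> real" where
  "centrist p a = 1 - 2 * p - a"

end

theory Submission
  imports Defs "HOL-Analysis.Analysis" "HOL-Real_Asymp.Real_Asymp"
begin

text \<open>Both P and A solve equations of the form f' = f h with h continuous, so they keep their
  sign and a zero stays zero. Since A' \<le> -\<rho> A, the disengaged share A dies out; in particular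
  the shock size \<Delta>, which only moves A at t0, is forgotten, and so is the pre-shock regime. If P > 0, then y = 1/P solves the linear equation
  y' = 2b - ((b - \<mu>) + (\<delta> - b) A) y whose coefficient tends to b - \<mu>. Comparing y with
  solutions of the relaxation equation y' = -m (y - 2b/m) for m close to b - \<mu> gives
  y \<longrightarrow> 2b/(b - \<mu>) if b > \<mu> and y \<longrightarrow> \<infinity> otherwise, i.e. P tends to (b - \<mu>)/(2b) or to 0,
  and C = 1 - 2P - A tends to \<mu>/b or to 1.\<close>

lemma relaxation_exp_bound:
  fixes f f' :: "real \<Rightarrow> real"
  assumes "s \<le> t"
    and deriv: "\<And>x. x \<in> {s..t} \<Longrightarrow> (f has_real_derivative f' x) (at x)"
    and relax: "\<And>x. x \<in> {s..t} \<Longrightarrow> f' x \<le> - l * (f x - Y)"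
  shows "f t - Y \<le> (f s - Y) * exp (- l * (t - s))"
proof -
  have "(f t - Y) * exp (l * t) \<le> (f s - Y) * exp (l * s)"
  proof (rule deriv_nonpos_imp_antimono[OF _ _ \<open>s \<le> t\<close>])
    fix x assume x: "x \<in> {s..t}"
    show "((\<lambda>x. (f x - Y) * exp (l * x)) has_real_derivative
        exp (l * x) * (f' x + l * (f x - Y))) (at x)"
      using x by (auto intro!: derivative_eq_intros deriv simp: algebra_simps)
    show "exp (l * x) * (f' x + l * (f x - Y)) \<le> 0"
      using relax[OF x] by (simp add: mult_nonneg_nonpos)
  qed
  then have "(f t - Y) * exp (l * t) * exp (- l * t) \<le> (f s - Y) * exp (l * s) * exp (- l * t)"
    by (rule mult_right_mono) simp
  then show ?thesis
    by (simp add: mult.assoc flip: exp_add) (simp add: algebra_simps)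
qed

lemma relaxation_eventually_le:
  fixes f f' :: "real \<Rightarrow> real"
  assumes "0 < l" "0 < \<epsilon>"
    and "\<forall>\<^sub>F t in at_top. (f has_real_derivative f' t) (at t) \<and> f' t \<le> - l * (f t - Y)"
  shows "\<forall>\<^sub>F t in at_top. f t < Y + \<epsilon>"
proof -
  obtain s where s: "\<And>t. s \<le> t \<Longrightarrow> (f has_real_derivative f' t) (at t) \<and> f' t \<le> - l * (f t - Y)"
    using assms(3) by (auto simp: eventually_at_top_linorder)
  have "((\<lambda>t. (f s - Y) * exp (- l * (t - s))) \<longlongrightarrow> 0) at_top"
    using \<open>0 < l\<close> by real_asymp
  then have "\<forall>\<^sub>F t in at_top. (f s - Y) * exp (- l * (t - s)) < \<epsilon>"
    using \<open>0 < \<epsilon>\<close> by (rule order_tendstoD)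
  moreover have "\<forall>\<^sub>F t in at_top. f t - Y \<le> (f s - Y) * exp (- l * (t - s))"
    using eventually_ge_at_top[of s]
  proof eventually_elim
    case (elim t)
    show ?case
      by (rule relaxation_exp_bound[OF elim]) (use s in auto)
  qed
  ultimately show ?thesis
    by eventually_elim simp
qed

lemma relaxation_eventually_ge:
  fixes f f' :: "real \<Rightarrow> real"
  assumes "0 < l" "0 < \<epsilon>"
    and "\<forall>\<^sub>F t in at_top. (f has_real_derivative f' t) (at t) \<and> f' t \<ge> - l * (f t - Y)"
  shows "\<forall>\<^sub>F t in at_top. Y - \<epsilon> < f t"
proof -
  have "\<forall>\<^sub>F t in at_top. - f t < - Y + \<epsilon>"
  proof (rule relaxation_eventually_le[OF assms(1,2)])
    show "\<forall>\<^sub>F t in at_top. ((\<lambda>t. - f t) has_real_derivative - f' t) (at t)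
        \<and> - f' t \<le> - l * (- f t - - Y)"
      using assms(3) by eventually_elim (auto intro: DERIV_minus simp: algebra_simps)
  qed
  then show ?thesis
    by eventually_elim simp
qed

lemma linear_ode_zero_iff:
  fixes f h :: "real \<Rightarrow> real"
  assumes "s \<le> t" and cont_f: "continuous_on {s..t} f" and cont_h: "continuous_on {s..t} h"
    and deriv: "\<And>x. x \<in> {s<..<t} \<Longrightarrow> (f has_real_derivative f x * h x) (at x)"
  shows "f s = 0 \<longleftrightarrow> f t = 0"
proof -
  txt \<open>With \<bar>h\<bar> \<le> M, the weighted squares f(x)^2 exp(-2Mx) and f(x)^2 exp(2Mx) are
    antitone and monotone, respectively.\<close>
  obtain M where M: "\<And>x. x \<in> {s..t} \<Longrightarrow> \<bar>h x\<bar> \<le> M"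
    using continuous_on_compact_bound[OF compact_Icc cont_h] by (metis real_norm_def)
  define w where "w c x = f x ^ 2 * exp (c * x)" for c x
  have w_deriv: "(w c has_real_derivative w c x * (2 * h x + c)) (at x)"
    if "x \<in> {s<..<t}" for c x
    unfolding w_def
    using that by (auto intro!: derivative_eq_intros deriv simp: algebra_simps power2_eq_square)
  have cont_w: "continuous_on {s..t} (w c)" for c
    unfolding w_def by (intro continuous_intros cont_f)
  have "w (- 2 * M) t \<le> w (- 2 * M) s"
  proof (rule DERIV_nonpos_imp_decreasing_open[OF \<open>s \<le> t\<close> _ cont_w])
    fix x assume "s < x" "x < t"
    then have "w (- 2 * M) x * (2 * h x - 2 * M) \<le> 0"
      using M[of x] by (intro mult_nonneg_nonpos) (auto simp: w_def)
    then show "\<exists>y. (w (- 2 * M) has_real_derivative y) (at x) \<and> y \<le> 0"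
      using w_deriv[of x "- 2 * M"] \<open>s < x\<close> \<open>x < t\<close> by auto
  qed
  moreover have "w (2 * M) s \<le> w (2 * M) t"
  proof (rule DERIV_nonneg_imp_increasing_open[OF \<open>s \<le> t\<close> _ cont_w])
    fix x assume "s < x" "x < t"
    then have "w (2 * M) x * (2 * h x + 2 * M) \<ge> 0"
      using M[of x] by (intro mult_nonneg_nonneg) (auto simp: w_def)
    then show "\<exists>y. (w (2 * M) has_real_derivative y) (at x) \<and> y \<ge> 0"
      using w_deriv[of x "2 * M"] \<open>s < x\<close> \<open>x < t\<close> by auto
  qed
  moreover have "w c x = 0 \<longleftrightarrow> f x = 0" and "0 \<le> w c x" for c x
    by (simp_all add: w_def)
  ultimately show ?thesis
    by (metis order.antisym)
qed

lemma linear_ode_stays_zero: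
  fixes f h :: "real \<Rightarrow> real"
  assumes "continuous_on {s..} f" "continuous_on {s..} h"
    and "\<And>x. s < x \<Longrightarrow> (f has_real_derivative f x * h x) (at x)"
    and "f s = 0" "s \<le> t"
  shows "f t = 0"
  using linear_ode_zero_iff[of s t f h] continuous_on_subset[OF assms(1), of "{s..t}"]
    continuous_on_subset[OF assms(2), of "{s..t}"] assms(3-5)
  by auto

lemma linear_ode_stays_pos:
  fixes f h :: "real \<Rightarrow> real"
  assumes cont_f: "continuous_on {s..} f" and cont_h: "continuous_on {s..} h"
    and deriv: "\<And>x. s < x \<Longrightarrow> (f has_real_derivative f x * h x) (at x)"
    and "0 < f s" "s \<le> t"
  shows "0 < f t"
proof (rule ccontr)
  assume "\<not> 0 < f t"
  moreover have "continuous_on {s..t} f"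
    using cont_f by (rule continuous_on_subset) auto
  ultimately obtain x where x: "s \<le> x" "x \<le> t" "f x = 0"
    using IVT2'[of f t 0 s] \<open>0 < f s\<close> \<open>s \<le> t\<close> by auto
  then have "f s = 0"
    using linear_ode_zero_iff[of s x f h] continuous_on_subset[OF cont_f, of "{s..x}"]
      continuous_on_subset[OF cont_h, of "{s..x}"] deriv
    by auto
  with \<open>0 < f s\<close> show False by simp
qed

lemma linear_ode_stays_nonneg:
  fixes f h :: "real \<Rightarrow> real"
  assumes "continuous_on {s..} f" "continuous_on {s..} h"
    and "\<And>x. s < x \<Longrightarrow> (f has_real_derivative f x * h x) (at x)"
    and "0 \<le> f s" "s \<le> t"
  shows "0 \<le> f t"
  using linear_ode_stays_zero[OF assms(1-3)] linear_ode_stays_pos[OF assms(1-3)] assms(4,5)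
  by (cases "f s = 0") (auto intro: less_imp_le)


lemma linear_ode_eventually_gt:
  fixes y g :: "real \<Rightarrow> real"
  assumes "0 < m" "0 < \<epsilon>"
    and "\<forall>\<^sub>F t in at_top. (y has_real_derivative a - g t * y t) (at t) \<and> 0 \<le> y t \<and> g t \<le> m"
  shows "\<forall>\<^sub>F t in at_top. a / m - \<epsilon> < y t"
proof (rule relaxation_eventually_ge[OF assms(1,2)])
  show "\<forall>\<^sub>F t in at_top. (y has_real_derivative a - g t * y t) (at t)
      \<and> a - g t * y t \<ge> - m * (y t - a / m)"
    using assms(3)
  proof eventually_elim
    case (elim t)
    then have "g t * y t \<le> m * y t"
      by (intro mult_right_mono) auto
    with elim \<open>0 < m\<close> show ?case
      by (simp add: algebra_simps)
  qed
qed

lemma linear_ode_eventually_lt: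
  fixes y g :: "real \<Rightarrow> real"
  assumes "0 < m" "0 < \<epsilon>"
    and "\<forall>\<^sub>F t in at_top. (y has_real_derivative a - g t * y t) (at t) \<and> 0 \<le> y t \<and> m \<le> g t"
  shows "\<forall>\<^sub>F t in at_top. y t < a / m + \<epsilon>"
proof (rule relaxation_eventually_le[OF assms(1,2)])
  show "\<forall>\<^sub>F t in at_top. (y has_real_derivative a - g t * y t) (at t)
      \<and> a - g t * y t \<le> - m * (y t - a / m)"
    using assms(3)
  proof eventually_elim
    case (elim t)
    then have "m * y t \<le> g t * y t"
      by (intro mult_right_mono) auto
    with elim \<open>0 < m\<close> show ?case
      by (simp add: algebra_simps)
  qed
qed

lemma linear_ode_tendsto:
  fixes y g :: "real \<Rightarrow> real"
  assumes ode: "\<forall>\<^sub>F t in at_top. (y has_real_derivative a - g t * y t) (at t) \<and> 0 \<le> y t"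
    and g: "(g \<longlongrightarrow> k) at_top" and "0 < k"
  shows "(y \<longlongrightarrow> a / k) at_top"
proof (rule order_tendstoI)
  fix x assume "x < a / k"
  have "((\<lambda>\<eta>. a / (k + \<eta>)) \<longlongrightarrow> a / (k + 0)) (at_right 0)"
    using \<open>0 < k\<close> by (intro tendsto_intros) auto
  then have "\<forall>\<^sub>F \<eta> in at_right 0. x < a / (k + \<eta>)"
    using \<open>x < a / k\<close> by (simp add: order_tendstoD(1))
  then have "\<forall>\<^sub>F \<eta> in at_right 0. x < a / (k + \<eta>) \<and> 0 < \<eta>"
    using eventually_at_right_less by (rule eventually_conj)
  then obtain \<eta> where \<eta>: "x < a / (k + \<eta>)" "0 < \<eta>"
    using eventually_happens'[OF trivial_limit_at_right_real] by blast
  have "\<forall>\<^sub>F t in at_top. g t < k + \<eta>"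
    using order_tendstoD(2)[OF g] \<eta>(2) by simp
  with ode have "\<forall>\<^sub>F t in at_top. (y has_real_derivative a - g t * y t) (at t) \<and> 0 \<le> y t
      \<and> g t \<le> k + \<eta>"
    by eventually_elim auto
  then have "\<forall>\<^sub>F t in at_top. a / (k + \<eta>) - (a / (k + \<eta>) - x) < y t"
    using \<open>0 < k\<close> \<eta> by (intro linear_ode_eventually_gt) auto
  then show "\<forall>\<^sub>F t in at_top. x < y t"
    by simp
next
  fix x assume "a / k < x"
  have "((\<lambda>\<eta>. a / (k - \<eta>)) \<longlongrightarrow> a / (k - 0)) (at_right 0)"
    using \<open>0 < k\<close> by (intro tendsto_intros) auto
  then have "\<forall>\<^sub>F \<eta> in at_right 0. a / (k - \<eta>) < x"
    using \<open>a / k < x\<close> by (simp add: order_tendstoD(2))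
  moreover have "\<forall>\<^sub>F \<eta> in at_right 0. \<eta> < k"
    using order_tendstoD(2)[OF tendsto_ident_at \<open>0 < k\<close>] .
  ultimately have "\<forall>\<^sub>F \<eta> in at_right 0. (a / (k - \<eta>) < x \<and> \<eta> < k) \<and> 0 < \<eta>"
    using eventually_at_right_less by (intro eventually_conj)
  then obtain \<eta> where \<eta>: "a / (k - \<eta>) < x" "\<eta> < k" "0 < \<eta>"
    using eventually_happens'[OF trivial_limit_at_right_real] by blast
  have "\<forall>\<^sub>F t in at_top. k - \<eta> < g t"
    using order_tendstoD(1)[OF g] \<eta>(3) by simp
  with ode have "\<forall>\<^sub>F t in at_top. (y has_real_derivative a - g t * y t) (at t) \<and> 0 \<le> y t
      \<and> k - \<eta> \<le> g t"
    by eventually_elim auto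
  then have "\<forall>\<^sub>F t in at_top. y t < a / (k - \<eta>) + (x - a / (k - \<eta>))"
    using \<eta> by (intro linear_ode_eventually_lt) auto
  then show "\<forall>\<^sub>F t in at_top. y t < x"
    by simp
qed

lemma linear_ode_filterlim_at_top:
  fixes y g :: "real \<Rightarrow> real"
  assumes ode: "\<forall>\<^sub>F t in at_top. (y has_real_derivative a - g t * y t) (at t) \<and> 0 \<le> y t"
    and g: "(g \<longlongrightarrow> k) at_top" and "k \<le> 0" "0 < a"
  shows "filterlim y at_top at_top"
  unfolding filterlim_at_top
proof
  fix Z :: real
  define \<eta> where "\<eta> = a / (\<bar>Z\<bar> + 1)"
  have "0 < \<eta>" "a / \<eta> - 1 = \<bar>Z\<bar>"
    using \<open>0 < a\<close> by (auto simp: \<eta>_def)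
  have "\<forall>\<^sub>F t in at_top. g t < \<eta>"
    using order_tendstoD(2)[OF g] \<open>k \<le> 0\<close> \<open>0 < \<eta>\<close> by simp
  with ode have "\<forall>\<^sub>F t in at_top. (y has_real_derivative a - g t * y t) (at t) \<and> 0 \<le> y t
      \<and> g t \<le> \<eta>"
    by eventually_elim auto
  then have "\<forall>\<^sub>F t in at_top. a / \<eta> - 1 < y t"
    using \<open>0 < \<eta>\<close> by (intro linear_ode_eventually_gt) auto
  then show "\<forall>\<^sub>F t in at_top. Z \<le> y t"
    by (rule eventually_mono) (use \<open>a / \<eta> - 1 = \<bar>Z\<bar>\<close> in linarith)
qed

lemma at_within_atLeast_eq_at: "s < t \<Longrightarrow> at t within {s..} = at (t::real)"
  by (rule at_within_open_subset[of t "{s<..}"]) auto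

locale polarisation_system =
  fixes b \<mu> \<delta> \<rho> t0 :: real and P A :: "real \<Rightarrow> real"
  assumes b_pos: "0 < b" and delta_nonneg: "0 \<le> \<delta>" and rho_pos: "0 < \<rho>"
    and P_start_nonneg: "0 \<le> P t0" and A_start_nonneg: "0 \<le> A t0"
    and P_ode: "\<And>t. t0 \<le> t \<Longrightarrow> (P has_real_derivative
        P t * ((b - \<mu>) - 2 * b * P t + (\<delta> - b) * A t)) (at t within {t0..})"
    and A_ode: "\<And>t. t0 \<le> t \<Longrightarrow> (A has_real_derivative
        - (2 * \<delta> * P t + \<rho>) * A t) (at t within {t0..})"
begin

lemma P_has_derivative:
  "t0 < t \<Longrightarrow> (P has_real_derivative P t * ((b - \<mu>) - 2 * b * P t + (\<delta> - b) * A t)) (at t)"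
  using P_ode[of t] by (simp add: at_within_atLeast_eq_at)

lemma A_has_derivative: "t0 < t \<Longrightarrow> (A has_real_derivative A t * - (2 * \<delta> * P t + \<rho>)) (at t)"
  using A_ode[of t] by (simp add: at_within_atLeast_eq_at mult.commute)

lemma continuous_on_P: "continuous_on {t0..} P"
  using P_ode by (auto simp: continuous_on_eq_continuous_within intro: DERIV_continuous)

lemma continuous_on_A: "continuous_on {t0..} A"
  using A_ode by (auto simp: continuous_on_eq_continuous_within intro: DERIV_continuous)

lemma continuous_on_P_growth_rate:
  "continuous_on {t0..} (\<lambda>t. (b - \<mu>) - 2 * b * P t + (\<delta> - b) * A t)"
  by (intro continuous_intros continuous_on_P continuous_on_A)

lemma P_nonneg: "t0 \<le> t \<Longrightarrow> 0 \<le> P t"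
  by (rule linear_ode_stays_nonneg[OF continuous_on_P continuous_on_P_growth_rate P_has_derivative
        P_start_nonneg])

lemma P_eq_0: "P t0 = 0 \<Longrightarrow> t0 \<le> t \<Longrightarrow> P t = 0"
  by (rule linear_ode_stays_zero[OF continuous_on_P continuous_on_P_growth_rate P_has_derivative])

lemma P_pos: "0 < P t0 \<Longrightarrow> t0 \<le> t \<Longrightarrow> 0 < P t"
  by (rule linear_ode_stays_pos[OF continuous_on_P continuous_on_P_growth_rate P_has_derivative])

lemma A_nonneg: "t0 \<le> t \<Longrightarrow> 0 \<le> A t"
proof (rule linear_ode_stays_nonneg[OF continuous_on_A _ A_has_derivative A_start_nonneg])
  show "continuous_on {t0..} (\<lambda>t. - (2 * \<delta> * P t + \<rho>))"
    by (intro continuous_intros continuous_on_P)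
qed

lemma A_tendsto_0: "(A \<longlongrightarrow> 0) at_top"
proof (rule order_tendstoI)
  fix a :: real assume "a < 0"
  show "\<forall>\<^sub>F t in at_top. a < A t"
    using eventually_ge_at_top[of t0] by eventually_elim (use A_nonneg \<open>a < 0\<close> in force)
next
  fix a :: real assume "0 < a"
  have "\<forall>\<^sub>F t in at_top. (A has_real_derivative A t * - (2 * \<delta> * P t + \<rho>)) (at t)
      \<and> A t * - (2 * \<delta> * P t + \<rho>) \<le> - \<rho> * (A t - 0)"
    using eventually_gt_at_top[of t0]
  proof eventually_elim
    case (elim t)
    have "0 \<le> \<delta> * P t * A t"
      using elim delta_nonneg P_nonneg[of t] A_nonneg[of t] by simp
    then show ?case
      using A_has_derivative[OF elim] by (simp add: algebra_simps)
  qed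
  from relaxation_eventually_le[OF rho_pos \<open>0 < a\<close> this]
  show "\<forall>\<^sub>F t in at_top. A t < a"
    by simp
qed

lemma inverse_P_has_derivative:
  assumes "0 < P t0" "t0 < t"
  shows "((\<lambda>t. inverse (P t)) has_real_derivative
      2 * b - ((b - \<mu>) + (\<delta> - b) * A t) * inverse (P t)) (at t)"
proof -
  have "P t \<noteq> 0"
    using P_pos[OF assms(1), of t] assms(2) by simp
  then have "- (P t * ((b - \<mu>) - 2 * b * P t + (\<delta> - b) * A t) * inverse (P t ^ 2))
      = 2 * b - ((b - \<mu>) + (\<delta> - b) * A t) * inverse (P t)"
    by (simp add: field_simps power2_eq_square)
  with DERIV_inverse_fun[OF P_has_derivative[OF \<open>t0 < t\<close>] \<open>P t \<noteq> 0\<close>, folded numeral_2_eq_2]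
  show ?thesis
    by (rule DERIV_cong)
qed

lemma inverse_P_linear_ode:
  assumes "0 < P t0"
  shows "\<forall>\<^sub>F t in at_top. ((\<lambda>t. inverse (P t)) has_real_derivative
      2 * b - ((b - \<mu>) + (\<delta> - b) * A t) * inverse (P t)) (at t) \<and> 0 \<le> inverse (P t)"
  using eventually_gt_at_top[of t0]
  by eventually_elim (use inverse_P_has_derivative P_nonneg assms in auto)

lemma inverse_P_coefficient_tendsto: "((\<lambda>t. (b - \<mu>) + (\<delta> - b) * A t) \<longlongrightarrow> b - \<mu>) at_top"
  using tendsto_add[OF tendsto_const tendsto_mult[OF tendsto_const A_tendsto_0]] by simp

lemma P_tendsto_equilibrium:
  assumes "0 < P t0" "\<mu> < b"
  shows "(P \<longlongrightarrow> (b - \<mu>) / (2 * b)) at_top"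
proof -
  have "((\<lambda>t. inverse (P t)) \<longlongrightarrow> 2 * b / (b - \<mu>)) at_top"
    using assms
    by (intro linear_ode_tendsto[OF inverse_P_linear_ode inverse_P_coefficient_tendsto]) auto
  then have "((\<lambda>t. inverse (inverse (P t))) \<longlongrightarrow> inverse (2 * b / (b - \<mu>))) at_top"
    using assms b_pos by (intro tendsto_inverse) auto
  then show ?thesis
    by simp
qed

lemma P_tendsto_0_of_start_0: "P t0 = 0 \<Longrightarrow> (P \<longlongrightarrow> 0) at_top"
  using eventually_ge_at_top[of t0]
  by (rule tendsto_eventually[OF eventually_mono]) (use P_eq_0 in auto)

lemma P_tendsto_0:
  assumes "b \<le> \<mu>"
  shows "(P \<longlongrightarrow> 0) at_top"
proof (cases "P t0 = 0")
  case False
  then have "0 < P t0"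
    using P_start_nonneg by simp
  have "filterlim (\<lambda>t. inverse (P t)) at_top at_top"
    using assms b_pos
    by (intro linear_ode_filterlim_at_top[OF inverse_P_linear_ode[OF \<open>0 < P t0\<close>]
          inverse_P_coefficient_tendsto]) auto
  from tendsto_inverse_0_at_top[OF this] show ?thesis
    by simp
qed (rule P_tendsto_0_of_start_0)

lemma centrist_tendsto_equilibrium:
  assumes "0 < P t0" "\<mu> < b"
  shows "((\<lambda>t. centrist (P t) (A t)) \<longlongrightarrow> \<mu> / b) at_top"
proof -
  have "((\<lambda>t. 1 - 2 * P t - A t) \<longlongrightarrow> 1 - 2 * ((b - \<mu>) / (2 * b)) - 0) at_top"
    by (intro tendsto_intros P_tendsto_equilibrium[OF assms] A_tendsto_0)
  moreover have "1 - 2 * ((b - \<mu>) / (2 * b)) - 0 = \<mu> / b"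
    using b_pos by (simp add: field_simps)
  ultimately show ?thesis
    by (simp add: centrist_def)
qed

lemma centrist_tendsto_1:
  assumes "b \<le> \<mu>"
  shows "((\<lambda>t. centrist (P t) (A t)) \<longlongrightarrow> 1) at_top"
proof -
  have "((\<lambda>t. 1 - 2 * P t - A t) \<longlongrightarrow> 1 - 2 * 0 - 0) at_top"
    by (intro tendsto_intros P_tendsto_0[OF assms] A_tendsto_0)
  then show ?thesis
    by (simp add: centrist_def)
qed

end

theorem theorem7p1:
  fixes \<mu> \<delta> \<rho> \<beta>0 \<Delta>\<beta> \<Delta> t0 P0 A0 :: real
    and P A :: "real \<Rightarrow> real"
  assumes params: "0 < \<mu>" "0 < \<delta>" "0 < \<rho>" "0 < \<beta>0"
    and pre: "\<beta>0 < \<mu>"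
    and post_pos: "0 < \<beta>0 + \<Delta>\<beta>"
    and shock: "0 \<le> \<Delta>" "\<Delta> \<le> 1"
    and state: "feasible P0 A0"
    and initP: "P t0 = P0"
    and initA: "A t0 = A0 + \<Delta> * centrist P0 A0"
    and odeP: "\<And>t. t0 \<le> t \<Longrightarrow> (P has_real_derivative
        P t * ((\<beta>0 + \<Delta>\<beta> - \<mu>) - 2 * (\<beta>0 + \<Delta>\<beta>) * P t
               + (\<delta> - (\<beta>0 + \<Delta>\<beta>)) * A t)) (at t within {t0..})"
    and odeA: "\<And>t. t0 \<le> t \<Longrightarrow> (A has_real_derivative
        - (2 * \<delta> * P t + \<rho>) * A t) (at t within {t0..})"
  shows "(0 < P0 \<longrightarrow>
            ((\<exists>L. ((\<lambda>t. centrist (P t) (A t)) \<longlongrightarrow> L) at_top \<and> L < 1)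
               \<longleftrightarrow> \<beta>0 + \<Delta>\<beta> > \<mu>)
          \<and> (\<beta>0 + \<Delta>\<beta> > \<mu> \<longrightarrow>
               ((\<lambda>t. centrist (P t) (A t)) \<longlongrightarrow> \<mu> / (\<beta>0 + \<Delta>\<beta>)) at_top
               \<and> \<mu> / (\<beta>0 + \<Delta>\<beta>) < 1)
          \<and> (\<beta>0 + \<Delta>\<beta> \<le> \<mu> \<longrightarrow>
               ((\<lambda>t. centrist (P t) (A t)) \<longlongrightarrow> 1) at_top))
       \<and> (P0 = 0 \<longrightarrow>
            (\<forall>t>t0. P t = 0) \<and> (P \<longlongrightarrow> 0) at_top \<and> (A \<longlongrightarrow> 0) at_top)"
proof -
  interpret polarisation_system "\<beta>0 + \<Delta>\<beta>" \<mu> \<delta> \<rho> t0 P A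
  proof
    show "0 \<le> A t0"
      using state shock initA by (simp add: feasible_def centrist_def)
  qed (use params post_pos state initP odeP odeA in \<open>auto simp: feasible_def\<close>)
  have shift_iff: "(\<exists>L. ((\<lambda>t. centrist (P t) (A t)) \<longlongrightarrow> L) at_top \<and> L < 1)
      \<longleftrightarrow> \<beta>0 + \<Delta>\<beta> > \<mu>" if "0 < P0"
  proof
    assume "\<exists>L. ((\<lambda>t. centrist (P t) (A t)) \<longlongrightarrow> L) at_top \<and> L < 1"
    then obtain L where "((\<lambda>t. centrist (P t) (A t)) \<longlongrightarrow> L) at_top" "L < 1"
      by blast
    then show "\<beta>0 + \<Delta>\<beta> > \<mu>"
      using centrist_tendsto_1 tendsto_unique[OF trivial_limit_at_top_linorder] by force
  next
    assume "\<beta>0 + \<Delta>\<beta> > \<mu>"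
    then show "\<exists>L. ((\<lambda>t. centrist (P t) (A t)) \<longlongrightarrow> L) at_top \<and> L < 1"
      using centrist_tendsto_equilibrium \<open>0 < P0\<close> initP post_pos by auto
  qed
  show ?thesis
    using shift_iff centrist_tendsto_equilibrium centrist_tendsto_1 post_pos initP
      P_eq_0 P_tendsto_0_of_start_0 A_tendsto_0
    by auto
qed

end
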